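(* Let $\mathbf G=(G,\le,\cdot,/,0,1)$ be a left-residuated po-groupoid satisfying the double negation law $\neg\neg x=x$ and the equation $(x\to y)\to y=(y\to x)\to x$ for all $x,y\in G$. Then for all $x,y,z\in G$: (a) $1\to x=x$; (b) $x\le y\to x$; (c) $x\le y$ iff $\neg y\le\neg x$ iff $x\to y=1$; (d) if $x\le y$ then $y\to z\le x\to z$.
   Context: A (bounded integral) left-residuated po-groupoid is a structure $\mathbf G=(G,\le,\cdot,/,0,1)$ where $(G,\le,0,1)$ is a bounded poset with least element $0$ and greatest element $1$, $\cdot$ is a binary operation on $G$ with $1\cdot x=x\cdot 1=x$ for all $x$ (no associativity, commutativity or monotonicity is assumed), and $/$ is a binary operation on $G$ satisfying the left residuation law: for all $x,y,z\in G$, $x\cdot y\le z\iff x\le z/y$. The negation is defined by $\neg x:=0/x$ and the implication by $x\to y:=\neg x/\neg y$. *)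

theory Defs
  imports Main
begin

text \<open>A bounded integral left-residuated po-groupoid, with carrier the whole type 'a.
  le is the partial order, mult the groupoid operation, res the left residual (x / y),
  zero the least and one the greatest element (and the unit of mult).\<close>
definition lrpg :: "('a \<Rightarrow> 'a \<Rightarrow> bool) \<Rightarrow> ('a \<Rightarrow> 'a \<Rightarrow> 'a) \<Rightarrow> ('a \<Rightarrow> 'a \<Rightarrow> 'a) \<Rightarrow> 'a \<Rightarrow> 'a \<Rightarrow> bool"
  where "lrpg le mult res zero one \<longleftrightarrow>
     (\<forall>x. le x x) \<and>
     (\<forall>x y. le x y \<and> le y x \<longrightarrow> x = y) \<and>
     (\<forall>x y z. le x y \<and> le y z \<longrightarrow> le x z) \<and>
     (\<forall>x. le zero x) \<and> (\<forall>x. le x one) \<and>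
     (\<forall>x. mult one x = x \<and> mult x one = x) \<and>
     (\<forall>x y z. le (mult x y) z \<longleftrightarrow> le x (res z y))"

definition neg :: "('a \<Rightarrow> 'a \<Rightarrow> 'a) \<Rightarrow> 'a \<Rightarrow> 'a \<Rightarrow> 'a"
  where "neg res zero x = res zero x"

definition imp :: "('a \<Rightarrow> 'a \<Rightarrow> 'a) \<Rightarrow> 'a \<Rightarrow> 'a \<Rightarrow> 'a \<Rightarrow> 'a"
  where "imp res zero x y = res (neg res zero x) (neg res zero y)"

end

theory Submission
  imports Defs
begin

text \<open>Residuation alone gives z / y = 1 \<longleftrightarrow> y \<le> z, so x \<rightarrow> y = 1 says
  \<not>y \<le> \<not>x, and 1 \<rightarrow> x = \<not>\<not>x = x by double negation. Double negation
  also gives x \<cdot> \<not>x \<le> 0, whence x \<le> y \<rightarrow> x. If x \<rightarrow> y = 1, the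
  exchange law turns y = 1 \<rightarrow> y = (x \<rightarrow> y) \<rightarrow> y into (y \<rightarrow> x) \<rightarrow> x, which
  lies above x; so \<not>y \<le> \<not>x forces x \<le> y, and the converse
  follows by applying this to \<not>\<not>x \<le> \<not>\<not>y.\<close>

locale left_residuated_po_groupoid =
  fixes le :: "'a \<Rightarrow> 'a \<Rightarrow> bool" and mult res :: "'a \<Rightarrow> 'a \<Rightarrow> 'a" and zero one :: 'a
  assumes lrpg: "lrpg le mult res zero one"
begin

lemma refl: "le x x"
  and antisym: "le x y \<Longrightarrow> le y x \<Longrightarrow> x = y"
  and trans: "le x y \<Longrightarrow> le y z \<Longrightarrow> le x z"
  and zero_le: "le zero x"
  and le_one: "le x one"
  and mult_one_left: "mult one x = x"
  and mult_one_right: "mult x one = x"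
  and residuation: "le (mult x y) z \<longleftrightarrow> le x (res z y)"
  using lrpg unfolding lrpg_def by blast+

lemma res_one_right: "res z one = z"
  using residuation[of _ one z] mult_one_right refl antisym by metis

lemma res_eq_one_iff: "res z y = one \<longleftrightarrow> le y z"
  using residuation[of one y z] mult_one_left le_one antisym by metis

lemma res_mono_left: "le z z' \<Longrightarrow> le (res z y) (res z' y)"
  using residuation refl trans by metis

lemma imp_eq_one_iff: "imp res zero x y = one \<longleftrightarrow> le (neg res zero y) (neg res zero x)"
  by (simp add: imp_def res_eq_one_iff)

lemma imp_antimono_left:
  "le (neg res zero y) (neg res zero x) \<Longrightarrow> le (imp res zero y z) (imp res zero x z)"
  by (simp add: imp_def res_mono_left)

end

locale involutive_left_residuated_po_groupoid = left_residuated_po_groupoid +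
  assumes double_neg: "neg res zero (neg res zero x) = x"
begin

lemma imp_one_left: "imp res zero one x = x"
  using double_neg[of x] by (simp add: imp_def neg_def res_one_right)

lemma mult_neg_le_zero: "le (mult x (neg res zero x)) zero"
  using double_neg[of x] residuation[of x "neg res zero x" zero] refl
  unfolding neg_def by metis

lemma le_imp: "le x (imp res zero y x)"
  using mult_neg_le_zero zero_le trans residuation unfolding imp_def by blast

end

locale exchange_left_residuated_po_groupoid = involutive_left_residuated_po_groupoid +
  assumes exchange: "imp res zero (imp res zero x y) y = imp res zero (imp res zero y x) x"
begin

lemma le_of_neg_le_neg:
  assumes "le (neg res zero y) (neg res zero x)"
  shows "le x y"
proof -
  have "imp res zero x y = one"
    using assms by (simp add: imp_eq_one_iff)
  then have "imp res zero (imp res zero y x) x = y"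
    using exchange[of x y] by (simp add: imp_one_left)
  then show ?thesis
    using le_imp[of x "imp res zero y x"] by simp
qed

lemma neg_le_neg_iff: "le (neg res zero y) (neg res zero x) \<longleftrightarrow> le x y"
proof
  assume "le x y"
  then have "le (neg res zero (neg res zero x)) (neg res zero (neg res zero y))"
    by (simp add: double_neg)
  then show "le (neg res zero y) (neg res zero x)"
    by (rule le_of_neg_le_neg)
qed (rule le_of_neg_le_neg)

end

theorem lemma3:
  fixes le :: "'a \<Rightarrow> 'a \<Rightarrow> bool" and mult res :: "'a \<Rightarrow> 'a \<Rightarrow> 'a" and zero one :: 'a
  assumes G: "lrpg le mult res zero one"
    and dn: "\<And>x. neg res zero (neg res zero x) = x"
    and eq: "\<And>x y. imp res zero (imp res zero x y) y = imp res zero (imp res zero y x) x"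
  shows "\<forall>x y z.
           imp res zero one x = x \<and>
           le x (imp res zero y x) \<and>
           (le x y \<longleftrightarrow> le (neg res zero y) (neg res zero x)) \<and>
           (le (neg res zero y) (neg res zero x) \<longleftrightarrow> imp res zero x y = one) \<and>
           (le x y \<longrightarrow> le (imp res zero y z) (imp res zero x z))"
proof -
  interpret exchange_left_residuated_po_groupoid le mult res zero one
    by unfold_locales (use G dn eq in auto)
  show ?thesis
    by (simp add: imp_one_left le_imp neg_le_neg_iff imp_eq_one_iff imp_antimono_left)
qed

end
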